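(* Let $a,b,c,y,\alpha$ be real numbers with $0<c<y<1$ and $y<b<a$. Then \[ \int_{c}^{y}\frac{1-\alpha u}{1-u^2}\,\frac{\mathrm{d}u}{\sqrt{(a-u)(b-u)(u-c)}} =\frac{\sqrt{y-c}}{(1-c^2)\sqrt{(a-c)(b-c)}}\left(2(1-c\alpha)\,X-\frac23\,\alpha\,(y-c)\,Y\right), \] where \[ X=\mathrm{F}_{D}^{(4)}\left(\tfrac12;1,1,\tfrac12,\tfrac12;\tfrac32;\ \frac{y-c}{1-c},\,-\frac{y-c}{1+c},\,-\frac{y-c}{c-a},\,-\frac{y-c}{c-b}\right), \] \[ Y=\mathrm{F}_{D}^{(4)}\left(\tfrac32;1,1,\tfrac12,\tfrac12;\tfrac52;\ \frac{y-c}{1-c},\,-\frac{y-c}{1+c},\,-\frac{y-c}{c-a},\,-\frac{y-c}{c-b}\right). \]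
   Context: For $n\ge1$, the Lauricella hypergeometric function of $n$ variables is \[ \mathrm{F}_{D}^{(n)}(a;b_1,\dots,b_n;c;x_1,\dots,x_n)=\sum_{m_1,\dots,m_n\ge0}\frac{(a)_{m_1+\cdots+m_n}(b_1)_{m_1}\cdots(b_n)_{m_n}}{(c)_{m_1+\cdots+m_n}\,m_1!\cdots m_n!}\,x_1^{m_1}\cdots x_n^{m_n},\qquad |x_i|<1, \] where $(\lambda)_m=\Gamma(\lambda+m)/\Gamma(\lambda)$ is the Pochhammer symbol; for $\operatorname{Re}c>\operatorname{Re}a>0$ it equals $\frac{\Gamma(c)}{\Gamma(a)\Gamma(c-a)}\int_0^1 u^{a-1}(1-u)^{c-a-1}\prod_{i=1}^n(1-x_iu)^{-b_i}\,\mathrm{d}u$, which gives its analytic continuation to $x_i\notin[1,\infty)$. *)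

theory Defs
  imports "HOL-Analysis.Analysis"
begin

text \<open>Lauricella hypergeometric function F_D of n variables, defined by its
  multiple power series (summed over all multi-indices m_0,...,m_{n-1} in nat,
  encoded as functions nat => nat vanishing from index n on).\<close>

definition lauricella_FD ::
  "nat \<Rightarrow> real \<Rightarrow> (nat \<Rightarrow> real) \<Rightarrow> real \<Rightarrow> (nat \<Rightarrow> real) \<Rightarrow> real" where
  "lauricella_FD n a b c x =
     (\<Sum>\<^sub>\<infinity> m \<in> {m :: nat \<Rightarrow> nat. \<forall>i\<ge>n. m i = 0}.
        pochhammer a (\<Sum>i<n. m i) * (\<Prod>i<n. pochhammer (b i) (m i))
        / (pochhammer c (\<Sum>i<n. m i) * (\<Prod>i<n. fact (m i)))
        * (\<Prod>i<n. x i ^ m i))"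

end

theory Submission
  imports Defs
begin

text \<open>The substitution u = c + (y - c) s^2 maps [0, 1] onto [c, y] and absorbs the square-root
  singularity at c; the factors 1 - u, 1 + u, a - u, b - u become constant multiples of
  1 - x_i s^2, where x_1, ..., x_4 are exactly the arguments of the Lauricella functions. The
  integral thus becomes the integral over [0, 1] of (A - B s^2) prod_i (1 - x_i s^2)^(-b_i).
  Expanding each factor as a binomial series gives a multiple power series in s^2 that converges
  absolutely and uniformly on [0, 1], so it may be integrated termwise. Since the integral of
  s^(2k + 2N) over [0, 1] is 1 / (2k + 2N + 1) = (k + 1/2)_N / ((2k + 1) (k + 3/2)_N), the terms
  carrying an extra factor s^(2k) sum to F_D(k + 1/2; b; k + 3/2; x) / (2k + 1); the cases
  k = 0 and k = 1 give X and Y / 3.\<close>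

definition binomial_series_term :: "real \<Rightarrow> real \<Rightarrow> nat \<Rightarrow> real" where
  "binomial_series_term b x n = pochhammer b n / fact n * x ^ n"

lemma binomial_series_term_scale:
  "binomial_series_term b (x * t) n = binomial_series_term b x n * t ^ n"
  by (simp add: binomial_series_term_def power_mult_distrib)

lemma sums_binomial_series:
  assumes "\<bar>x\<bar> < 1"
  shows "binomial_series_term b x sums (1 - x) powr (- b)"
proof -
  have "(\<lambda>n. ((- b) gchoose n) * (- x) ^ n) sums (1 + (- x)) powr (- b)"
    using gen_binomial_real[of "- x" "- b"] assms by simp
  moreover have "((- b) gchoose n) * (- x) ^ n = binomial_series_term b x n" for n
    unfolding binomial_series_term_def gbinomial_pochhammer
    by (simp add: power_mult_distrib[symmetric] flip: power_minus)
  ultimately show ?thesis by simp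
qed

lemma abs_summable_binomial_series:
  assumes "\<bar>x\<bar> < 1" "b > 0"
  shows "(\<lambda>n. norm (binomial_series_term b x n)) summable_on UNIV"
proof -
  have "norm (binomial_series_term b x n) = binomial_series_term b \<bar>x\<bar> n" for n
    using assms(2) by (simp add: binomial_series_term_def abs_mult power_abs pochhammer_nonneg)
  moreover have "binomial_series_term b \<bar>x\<bar> summable_on UNIV"
  proof (rule summable_nonneg_imp_summable_on)
    show "summable (binomial_series_term b \<bar>x\<bar>)"
      using sums_binomial_series[of "\<bar>x\<bar>" b] assms(1) by (simp add: sums_summable)
  qed (use assms(2) in \<open>simp add: binomial_series_term_def pochhammer_nonneg\<close>)
  ultimately show ?thesis by simp
qed

lemma has_sum_binomial_series:
  assumes "\<bar>x\<bar> < 1" "b > 0"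
  shows "(binomial_series_term b x has_sum (1 - x) powr (- b)) UNIV"
proof -
  have "binomial_series_term b x summable_on UNIV"
    using abs_summable_binomial_series[OF assms] by (rule abs_summable_summable)
  then have "(binomial_series_term b x has_sum infsum (binomial_series_term b x) UNIV) UNIV"
    by simp
  moreover from this have "binomial_series_term b x sums infsum (binomial_series_term b x) UNIV"
    by (rule has_sum_imp_sums)
  ultimately show ?thesis
    using sums_binomial_series[OF assms(1)] sums_unique2 by metis
qed

lemma bij_betw_restrict_finite_support:
  "bij_betw (\<lambda>m. restrict m {..<n}) {m :: nat \<Rightarrow> 'a :: zero. \<forall>i\<ge>n. m i = 0}
     (PiE {..<n} (\<lambda>_. UNIV))"
proof (rule bij_betwI')
  fix m m' :: "nat \<Rightarrow> 'a" assume "m \<in> {m. \<forall>i\<ge>n. m i = 0}" "m' \<in> {m. \<forall>i\<ge>n. m i = 0}"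
  then show "(restrict m {..<n} = restrict m' {..<n}) = (m = m')"
    by (auto simp: fun_eq_iff restrict_def) (metis not_le)
next
  fix p :: "nat \<Rightarrow> 'a" assume p: "p \<in> PiE {..<n} (\<lambda>_. UNIV)"
  show "\<exists>m\<in>{m. \<forall>i\<ge>n. m i = 0}. p = restrict m {..<n}"
    by (rule bexI[of _ "\<lambda>i. if i < n then p i else 0"])
       (use p in \<open>auto simp: fun_eq_iff PiE_def extensional_def\<close>)
qed auto

lemma abs_summable_prod_finite_support:
  fixes f :: "nat \<Rightarrow> nat \<Rightarrow> real"
  assumes "\<And>i. i < n \<Longrightarrow> (\<lambda>k. norm (f i k)) summable_on UNIV"
  shows "(\<lambda>m. norm (\<Prod>i<n. f i (m i))) summable_on {m. \<forall>i\<ge>n. m i = 0}"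
proof -
  have "Infinite_Set_Sum.abs_summable_on (\<lambda>g. \<Prod>i<n. f i (g i)) (PiE {..<n} (\<lambda>_. UNIV))"
    by (rule abs_summable_on_prod_PiE) (auto intro!: abs_summable_equivalent[THEN iffD1] assms)
  then have "(\<lambda>g. norm (\<Prod>i<n. f i (g i))) summable_on PiE {..<n} (\<lambda>_. UNIV)"
    by (rule abs_summable_equivalent[THEN iffD2])
  then have "(\<lambda>m. norm (\<Prod>i<n. f i (restrict m {..<n} i))) summable_on {m. \<forall>i\<ge>n. m i = 0}"
    by (rule summable_on_reindex_bij_betw[OF bij_betw_restrict_finite_support, THEN iffD2])
  then show ?thesis by simp
qed

lemma has_sum_prod_finite_support:
  fixes f :: "nat \<Rightarrow> nat \<Rightarrow> real"
  assumes sums: "\<And>i. i < n \<Longrightarrow> (f i has_sum S i) UNIV"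
    and abs_summable: "\<And>i. i < n \<Longrightarrow> (\<lambda>k. norm (f i k)) summable_on UNIV"
  shows "((\<lambda>m. \<Prod>i<n. f i (m i)) has_sum (\<Prod>i<n. S i)) {m. \<forall>i\<ge>n. m i = 0}"
proof -
  let ?M = "{m :: nat \<Rightarrow> nat. \<forall>i\<ge>n. m i = 0}"
  have "(\<Sum>\<^sub>\<infinity>m\<in>?M. \<Prod>i<n. f i (m i)) = (\<Sum>\<^sub>\<infinity>m\<in>?M. \<Prod>i<n. f i (restrict m {..<n} i))"
    by (intro infsum_cong prod.cong) auto
  also have "\<dots> = (\<Sum>\<^sub>\<infinity>g\<in>PiE {..<n} (\<lambda>_. UNIV). \<Prod>i<n. f i (g i))"
    by (rule infsum_reindex_bij_betw[OF bij_betw_restrict_finite_support])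
  also have "\<dots> = (\<Prod>i<n. infsum (f i) UNIV)"
    by (rule infsum_prod_PiE_abs) (use abs_summable in auto)
  also have "\<dots> = (\<Prod>i<n. S i)"
    using sums by (intro prod.cong) (auto intro: infsumI)
  finally have sum_eq: "(\<Sum>\<^sub>\<infinity>m\<in>?M. \<Prod>i<n. f i (m i)) = (\<Prod>i<n. S i)" .
  have "(\<lambda>m. \<Prod>i<n. f i (m i)) summable_on ?M"
    by (rule abs_summable_summable[OF abs_summable_prod_finite_support[OF abs_summable]])
  from has_sum_infsum[OF this] show ?thesis
    unfolding sum_eq .
qed

lemma has_integral_has_sum_termwise:
  fixes f :: "'a \<Rightarrow> real \<Rightarrow> real"
  assumes cont: "\<And>m. m \<in> M \<Longrightarrow> continuous_on {a..b} (f m)"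
    and integral: "\<And>m. m \<in> M \<Longrightarrow> (f m has_integral v m) {a..b}"
    and bound: "\<And>m s. m \<in> M \<Longrightarrow> s \<in> {a..b} \<Longrightarrow> \<bar>f m s\<bar> \<le> B m"
    and B: "B summable_on M"
    and series: "\<And>s. s \<in> {a..b} \<Longrightarrow> ((\<lambda>m. f m s) has_sum F s) M"
  obtains J where "(F has_integral J) {a..b}" and "(v has_sum J) M"
proof -
  define G where "G X s = (\<Sum>m\<in>X \<inter> M. f m s)" for X s
  have subsets: "\<forall>\<^sub>F X in finite_subsets_at_top M. finite X \<and> X \<subseteq> M"
    by (rule eventually_finite_subsets_at_top_weakI) auto
  have "uniform_limit {a..b} (\<lambda>X s. \<Sum>m\<in>X. f m s) F (finite_subsets_at_top M)"
    by (rule Weierstrass_m_test_general') (use bound series B in auto)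
  also have "?this \<longleftrightarrow> uniform_limit {a..b} G F (finite_subsets_at_top M)"
    by (intro uniform_limit_cong refl)
       (use subsets in \<open>eventually_elim, auto simp: G_def Int_absorb2\<close>)
  finally have G_lim: "uniform_limit {a..b} G F (finite_subsets_at_top M)" .
  have G_cont: "continuous_on {a..b} (G X)" for X
    unfolding G_def using cont by (intro continuous_on_sum) auto
  obtain I J where I: "\<And>X. (G X has_integral I X) {a..b}"
    and J: "(F has_integral J) {a..b}" and lim: "(I \<longlongrightarrow> J) (finite_subsets_at_top M)"
    using uniform_limit_integral[OF G_lim G_cont finite_subsets_at_top_neq_bot] by blast
  have "\<forall>\<^sub>F X in finite_subsets_at_top M. I X = sum v X"
    using subsets
  proof eventually_elim
    case (elim X)
    then have "G X = (\<lambda>s. \<Sum>m\<in>X. f m s)"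
      by (auto simp: G_def Int_absorb2)
    moreover have "((\<lambda>s. \<Sum>m\<in>X. f m s) has_integral sum v X) {a..b}"
      using elim integral by (intro has_integral_sum) auto
    ultimately have "(G X has_integral sum v X) {a..b}"
      by simp
    then show ?case using I has_integral_unique by blast
  qed
  with lim have "(v has_sum J) M"
    unfolding has_sum_def using tendsto_cong by blast
  with J show ?thesis by (rule that)
qed

lemma pochhammer_ratio_shift:
  fixes a :: real
  assumes "a > 0"
  shows "pochhammer a k / pochhammer (a + 1) k = a / (a + k)"
proof -
  have "pochhammer a k * (a + k) = a * pochhammer (a + 1) k"
    using pochhammer_rec[of a k] pochhammer_rec'[of a k] by (simp add: mult.commute)
  moreover have "pochhammer (a + 1) k > 0" "a + k > 0"
    using assms by (auto intro: pochhammer_pos)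
  ultimately show ?thesis by (simp add: field_simps)
qed

lemma has_integral_power_01: "((\<lambda>s. s ^ k) has_integral 1 / (k + 1)) {0..1::real}"
proof -
  have "((\<lambda>s. s ^ k) has_integral 1 ^ Suc k / Suc k - 0 ^ Suc k / Suc k) {0..1::real}"
  proof (rule fundamental_theorem_of_calculus)
    show "((\<lambda>s. s ^ Suc k / Suc k) has_vector_derivative s ^ k) (at s within {0..1})" for s :: real
      unfolding has_real_derivative_iff_has_vector_derivative[symmetric]
      by (rule derivative_eq_intros refl | simp)+
  qed simp
  then show ?thesis by (simp add: add.commute)
qed

lemma abs_mult_power2_less_one:
  fixes x s :: real
  assumes "\<bar>x\<bar> < 1" "s \<in> {0..1}"
  shows "\<bar>x * s\<^sup>2\<bar> < 1"
proof -
  have "\<bar>x\<bar> * s\<^sup>2 \<le> \<bar>x\<bar>"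
    using assms by (intro mult_left_le) (auto simp: power_le_one)
  then show ?thesis
    using assms(1) by (simp add: abs_mult)
qed

lemma lauricella_FD_term_half_integer:
  fixes b x :: "nat \<Rightarrow> real" and m :: "nat \<Rightarrow> nat" and n k :: nat
  defines "N \<equiv> \<Sum>i<n. m i"
  shows "pochhammer (real k + 1/2) N * (\<Prod>i<n. pochhammer (b i) (m i))
           / (pochhammer (real k + 3/2) N * (\<Prod>i<n. fact (m i))) * (\<Prod>i<n. x i ^ m i)
         = (2 * real k + 1) * ((\<Prod>i<n. binomial_series_term (b i) (x i) (m i))
                                 / (real (2 * (k + N)) + 1))"
proof -
  have "pochhammer (real k + 1/2) N / pochhammer (real k + 3/2) N
        = (real k + 1/2) / (real k + 1/2 + N)"
    using pochhammer_ratio_shift[of "real k + 1/2" N] by (simp add: add.assoc)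
  also have "\<dots> = (2 * (real k + 1/2)) / (2 * (real k + 1/2 + N))"
    by (rule nonzero_mult_divide_mult_cancel_left[symmetric]) simp
  also have "\<dots> = (2 * real k + 1) / (real (2 * (k + N)) + 1)"
    by (simp add: algebra_simps)
  finally have ratio: "pochhammer (real k + 1/2) N / pochhammer (real k + 3/2) N
                       = (2 * real k + 1) / (real (2 * (k + N)) + 1)" .
  have "pochhammer (real k + 1/2) N * (\<Prod>i<n. pochhammer (b i) (m i))
          / (pochhammer (real k + 3/2) N * (\<Prod>i<n. fact (m i))) * (\<Prod>i<n. x i ^ m i)
        = (\<Prod>i<n. binomial_series_term (b i) (x i) (m i))
            * (pochhammer (real k + 1/2) N / pochhammer (real k + 3/2) N)"
    by (simp add: binomial_series_term_def prod.distrib prod_dividef ac_simps)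
  also have "\<dots> = (2 * real k + 1) * ((\<Prod>i<n. binomial_series_term (b i) (x i) (m i))
                                       / (real (2 * (k + N)) + 1))"
    unfolding ratio by simp
  finally show ?thesis .
qed

lemma has_sum_prod_binomial_series_power2:
  fixes b x :: "nat \<Rightarrow> real" and s :: real
  assumes b: "\<And>i. i < n \<Longrightarrow> b i > 0" and x: "\<And>i. i < n \<Longrightarrow> \<bar>x i\<bar> < 1" and "s \<in> {0..1}"
  shows "((\<lambda>m. (\<Prod>i<n. binomial_series_term (b i) (x i) (m i)) * s ^ (2 * (k + (\<Sum>i<n. m i))))
           has_sum s ^ (2 * k) * (\<Prod>i<n. (1 - x i * s\<^sup>2) powr (- b i))) {m. \<forall>i\<ge>n. m i = 0}"
proof -
  have "((\<lambda>m. \<Prod>i<n. binomial_series_term (b i) (x i * s\<^sup>2) (m i))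
          has_sum (\<Prod>i<n. (1 - x i * s\<^sup>2) powr (- b i))) {m. \<forall>i\<ge>n. m i = 0}"
    by (rule has_sum_prod_finite_support[OF has_sum_binomial_series abs_summable_binomial_series])
       (use b x abs_mult_power2_less_one \<open>s \<in> {0..1}\<close> in auto)
  then have "((\<lambda>m. s ^ (2 * k) * (\<Prod>i<n. binomial_series_term (b i) (x i * s\<^sup>2) (m i)))
               has_sum s ^ (2 * k) * (\<Prod>i<n. (1 - x i * s\<^sup>2) powr (- b i))) {m. \<forall>i\<ge>n. m i = 0}"
    by (rule has_sum_cmult_right)
  moreover have "s ^ (2 * k) * (\<Prod>i<n. binomial_series_term (b i) (x i * s\<^sup>2) (m i))
                 = (\<Prod>i<n. binomial_series_term (b i) (x i) (m i)) * s ^ (2 * (k + (\<Sum>i<n. m i)))"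
    for m :: "nat \<Rightarrow> nat"
    by (simp add: binomial_series_term_scale prod.distrib power_mult power_sum power_add algebra_simps)
  ultimately show ?thesis by simp
qed

lemma continuous_on_prod_powr_one_minus_power2:
  fixes b x :: "nat \<Rightarrow> real"
  assumes "\<And>i. i < n \<Longrightarrow> \<bar>x i\<bar> < 1"
  shows "continuous_on {0..1} (\<lambda>s. \<Prod>i<n. (1 - x i * s\<^sup>2) powr (- b i))"
proof (intro continuous_intros ballI)
  fix i s assume "i \<in> {..<n}" "s \<in> {0..1::real}"
  with abs_mult_power2_less_one[OF assms] show "1 - x i * s\<^sup>2 \<noteq> 0"
    by fastforce
qed

theorem lauricella_FD_half_integer_has_integral:
  fixes b x :: "nat \<Rightarrow> real" and k :: nat
  assumes b: "\<And>i. i < n \<Longrightarrow> b i > 0" and x: "\<And>i. i < n \<Longrightarrow> \<bar>x i\<bar> < 1"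
  shows "((\<lambda>s. s ^ (2 * k) * (\<Prod>i<n. (1 - x i * s\<^sup>2) powr (- b i)))
           has_integral lauricella_FD n (k + 1/2) b (k + 3/2) x / (2 * k + 1)) {0..1}"
proof -
  define M where "M = {m :: nat \<Rightarrow> nat. \<forall>i\<ge>n. m i = 0}"
  define coef where "coef m = (\<Prod>i<n. binomial_series_term (b i) (x i) (m i))" for m
  define deg where "deg m = 2 * (k + (\<Sum>i<n. m i))" for m
  have abs_summable: "(\<lambda>m. \<bar>coef m\<bar>) summable_on M"
    unfolding M_def coef_def real_norm_def[symmetric]
    by (rule abs_summable_prod_finite_support[OF abs_summable_binomial_series[OF x b]])
  obtain J where J: "((\<lambda>s. s ^ (2 * k) * (\<Prod>i<n. (1 - x i * s\<^sup>2) powr (- b i))) has_integral J) {0..1}"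
    and sum_J: "((\<lambda>m. coef m / (real (deg m) + 1)) has_sum J) M"
  proof (rule has_integral_has_sum_termwise[where f="\<lambda>m s. coef m * s ^ deg m"])
    show "((\<lambda>s. coef m * s ^ deg m) has_integral coef m / (real (deg m) + 1)) {0..1}" for m
      using has_integral_mult_right[OF has_integral_power_01[of "deg m"], of "coef m"]
      by (simp add: add.commute)
    show "\<bar>coef m * s ^ deg m\<bar> \<le> \<bar>coef m\<bar>" if "s \<in> {0..1}" for m s
      using that by (simp add: abs_mult power_abs mult_left_le power_le_one)
    show "((\<lambda>m. coef m * s ^ deg m) has_sum
            s ^ (2 * k) * (\<Prod>i<n. (1 - x i * s\<^sup>2) powr (- b i))) M" if "s \<in> {0..1}" for s
      unfolding M_def coef_def deg_def by (rule has_sum_prod_binomial_series_power2[OF b x that])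
  qed (use abs_summable in \<open>auto intro!: continuous_intros\<close>)
  have "lauricella_FD n (k + 1/2) b (k + 3/2) x
        = (\<Sum>\<^sub>\<infinity>m\<in>M. (2 * real k + 1) * (coef m / (real (deg m) + 1)))"
    unfolding lauricella_FD_def M_def[symmetric] coef_def deg_def
    by (intro infsum_cong lauricella_FD_term_half_integer)
  also have "\<dots> = (2 * real k + 1) * J"
    using has_sum_cmult_right[OF sum_J] by (rule infsumI)
  finally have "lauricella_FD n (k + 1/2) b (k + 3/2) x / (2 * real k + 1) = J"
    by simp
  with J show ?thesis
    by (simp add: add.commute)
qed

lemma quadratic_substitution_mem:
  fixes c y s :: real
  assumes "c \<le> y" "s \<in> {0..1}"
  shows "c + (y - c) * s\<^sup>2 \<in> {c..y}"
proof -
  have "(y - c) * s\<^sup>2 \<le> y - c"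
    using assms by (intro mult_left_le) (auto simp: power_le_one)
  moreover have "0 \<le> (y - c) * s\<^sup>2"
    using assms by simp
  ultimately show ?thesis by simp
qed

lemma has_integral_quadratic_substitution:
  fixes f Q :: "real \<Rightarrow> real"
  assumes "c < y" and Q_cont: "continuous_on {0..1} Q" and Q_integral: "(Q has_integral I) {0..1}"
    and Q_eq: "\<And>s. 0 < s \<Longrightarrow> s \<le> 1 \<Longrightarrow> 2 * (y - c) * s * f (c + (y - c) * s\<^sup>2) = Q s"
  shows "(f has_integral I) {c..y}"
proof -
  define g where "g s = c + (y - c) * s\<^sup>2" for s :: real
  have g_image: "g ` {0..1} = {c..y}"
  proof
    show "g ` {0..1} \<subseteq> {c..y}"
      unfolding g_def using \<open>c < y\<close> by (intro image_subsetI quadratic_substitution_mem) auto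
    show "{c..y} \<subseteq> g ` {0..1}"
    proof
      fix u assume u: "u \<in> {c..y}"
      then have "sqrt ((u - c) / (y - c)) \<in> {0..1}" "g (sqrt ((u - c) / (y - c))) = u"
        using \<open>c < y\<close> by (auto simp: g_def)
      then show "u \<in> g ` {0..1}" by (metis imageI)
    qed
  qed
  have "(\<lambda>s. \<bar>2 * (y - c) * s\<bar> * f (g s)) absolutely_integrable_on {0..1} \<and>
          integral {0..1} (\<lambda>s. \<bar>2 * (y - c) * s\<bar> * f (g s)) = I
        \<longleftrightarrow> f absolutely_integrable_on g ` {0..1} \<and> integral (g ` {0..1}) f = I"
  proof (rule has_absolute_integral_change_of_variables_1')
    show "(g has_field_derivative 2 * (y - c) * s) (at s within {0..1})" for s
      unfolding g_def by (rule derivative_eq_intros refl | simp)+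
    show "inj_on g {0..1}"
      using \<open>c < y\<close> by (intro inj_onI) (auto simp: g_def power2_eq_iff_nonneg)
  qed simp
  \<comment> \<open>\<open>f\<close> may be unbounded near \<open>c\<close>; absolute integrability comes from the continuous \<open>Q\<close>.\<close>
  moreover have Q_spike: "\<bar>2 * (y - c) * s\<bar> * f (g s) = Q s" if "s \<in> {0..1} - {0}" for s
    using that \<open>c < y\<close> Q_eq[of s] by (simp add: g_def)
  have "(\<lambda>s. \<bar>2 * (y - c) * s\<bar> * f (g s)) absolutely_integrable_on {0..1}"
    by (rule absolutely_integrable_spike[OF absolutely_integrable_continuous_real[OF Q_cont]
          negligible_sing Q_spike])
  moreover have "((\<lambda>s. \<bar>2 * (y - c) * s\<bar> * f (g s)) has_integral I) {0..1}"
    by (rule has_integral_spike[OF negligible_sing Q_spike Q_integral])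
  ultimately show ?thesis
    unfolding g_image by (metis absolutely_integrable_on_def integrable_integral integral_unique)
qed

lemma integrand_quadratic_substitution_eq:
  fixes a b c y \<alpha> s :: real
  assumes "0 < c" "c < y" "y < 1" "y < b" "b < a" "0 < s" "s \<le> 1"
  defines "x \<equiv> [(y - c) / (1 - c), - (y - c) / (1 + c), - (y - c) / (c - a), - (y - c) / (c - b)]"
    and "u \<equiv> c + (y - c) * s\<^sup>2"
  shows "2 * (y - c) * s * ((1 - \<alpha> * u) / (1 - u\<^sup>2) / sqrt ((a - u) * (b - u) * (u - c)))
         = 2 * (sqrt (y - c) / ((1 - c\<^sup>2) * sqrt ((a - c) * (b - c)))) * (1 - c * \<alpha> - \<alpha> * (y - c) * s\<^sup>2)
           * (\<Prod>i<4. (1 - x ! i * s\<^sup>2) powr (- [1, 1, 1/2, 1/2] ! i))"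
proof -
  define d1 d2 d3 d4 where "d1 = (1 - u) / (1 - c)" and "d2 = (1 + u) / (1 + c)"
    and "d3 = (a - u) / (a - c)" and "d4 = (b - u) / (b - c)"
  have u: "c < u" "u \<le> y"
    using quadratic_substitution_mem[of c y s] assms by (auto simp: u_def)
  have d_pos: "d1 > 0" "d2 > 0" "d3 > 0" "d4 > 0"
    using assms u by (auto simp: d1_def d2_def d3_def d4_def)
  have "1 - x ! 0 * s\<^sup>2 = d1" "1 - x ! 1 * s\<^sup>2 = d2" "1 - x ! 2 * s\<^sup>2 = d3" "1 - x ! 3 * s\<^sup>2 = d4"
    using assms by (simp_all add: x_def u_def d1_def d2_def d3_def d4_def field_simps)
  then have "(\<Prod>i<4. (1 - x ! i * s\<^sup>2) powr (- [1, 1, 1/2, 1/2] ! i))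
        = d1 powr (-1) * d2 powr (-1) * d3 powr (-(1/2)) * d4 powr (-(1/2))"
    by (simp add: eval_nat_numeral)
  also have "\<dots> = 1 / (d1 * d2 * sqrt d3 * sqrt d4)"
    using d_pos by (simp add: powr_neg_one powr_minus_divide powr_half_sqrt)
  finally have kernel: "(\<Prod>i<4. (1 - x ! i * s\<^sup>2) powr (- [1, 1, 1/2, 1/2] ! i))
                        = 1 / (d1 * d2 * sqrt d3 * sqrt d4)" .
  define r S where "r = sqrt (y - c)" and "S = sqrt ((a - c) * (b - c))"
  have pos: "0 < r" "0 < S" "0 < 1 - c\<^sup>2" "0 < sqrt d3" "0 < sqrt d4"
    using assms d_pos by (auto simp: r_def S_def power_less_one_iff)
  have denom: "1 - u\<^sup>2 = (1 - c\<^sup>2) * d1 * d2"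
  proof -
    have "1 - u\<^sup>2 = (1 - u) * (1 + u)" "1 - c\<^sup>2 = (1 - c) * (1 + c)"
      by (simp_all add: power2_eq_square algebra_simps)
    then show ?thesis
      using \<open>c < y\<close> \<open>y < 1\<close> \<open>0 < c\<close> by (simp add: d1_def d2_def)
  qed
  have root: "sqrt ((a - u) * (b - u) * (u - c)) = S * sqrt d3 * sqrt d4 * (r * s)"
  proof -
    have "(a - u) * (b - u) * (u - c) = (a - c) * (b - c) * d3 * d4 * (sqrt (y - c) * s)\<^sup>2"
      using assms by (simp add: d3_def d4_def u_def power_mult_distrib)
    then show ?thesis
      using assms d_pos by (simp add: real_sqrt_mult r_def S_def)
  qed
  have numer: "1 - \<alpha> * u = 1 - c * \<alpha> - \<alpha> * (y - c) * s\<^sup>2"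
    by (simp add: u_def algebra_simps)
  have jacobian: "2 * (y - c) * s = 2 * r * (r * s)"
    using \<open>c < y\<close> by (simp add: r_def flip: power2_eq_square)
  show ?thesis
    unfolding jacobian numer denom root kernel r_def[symmetric] S_def[symmetric] using pos \<open>0 < s\<close> d_pos
    by (simp add: field_simps)
qed

theorem mainTheorem1:
  fixes a b c y \<alpha> :: real
  assumes "0 < c" "c < y" "y < 1" "y < b" "b < a"
  shows "((\<lambda>u. (1 - \<alpha> * u) / (1 - u^2) / sqrt ((a - u) * (b - u) * (u - c)))
          has_integral
          (sqrt (y - c) / ((1 - c^2) * sqrt ((a - c) * (b - c))) *
            (2 * (1 - c * \<alpha>) *
               lauricella_FD 4 (1/2) ((!) [1, 1, 1/2, 1/2]) (3/2)
                 ((!) [(y - c) / (1 - c), - (y - c) / (1 + c), - (y - c) / (c - a), - (y - c) / (c - b)])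
             - 2/3 * \<alpha> * (y - c) *
               lauricella_FD 4 (3/2) ((!) [1, 1, 1/2, 1/2]) (5/2)
                 ((!) [(y - c) / (1 - c), - (y - c) / (1 + c), - (y - c) / (c - a), - (y - c) / (c - b)]))))
          {c..y}"
proof -
  let ?b = "(!) [1, 1, 1/2, 1/2] :: nat \<Rightarrow> real"
  let ?x = "(!) [(y - c) / (1 - c), - (y - c) / (1 + c), - (y - c) / (c - a), - (y - c) / (c - b)]"
  let ?P = "\<lambda>s. \<Prod>i<4. (1 - ?x i * s\<^sup>2) powr (- ?b i)"
  define X Y where "X = lauricella_FD 4 (1/2) ?b (3/2) ?x" and "Y = lauricella_FD 4 (3/2) ?b (5/2) ?x"
  define D where "D = sqrt (y - c) / ((1 - c\<^sup>2) * sqrt ((a - c) * (b - c)))"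
  define Q where "Q s = 2 * D * (1 - c * \<alpha> - \<alpha> * (y - c) * s\<^sup>2) * ?P s" for s
  have b_pos: "?b i > 0" and x_bound: "\<bar>?x i\<bar> < 1" if "i < 4" for i
  proof -
    have "i \<in> {0, 1, 2, 3}" using that by auto
    then show "?b i > 0" "\<bar>?x i\<bar> < 1"
      using assms by (auto simp: abs_less_iff field_simps)
  qed
  have "(?P has_integral X) {0..1}"
    using lauricella_FD_half_integer_has_integral[of 4 ?b ?x 0] b_pos x_bound by (simp add: X_def)
  moreover have "((\<lambda>s. s\<^sup>2 * ?P s) has_integral Y / 3) {0..1}"
    using lauricella_FD_half_integer_has_integral[of 4 ?b ?x 1] b_pos x_bound by (simp add: Y_def)
  ultimately have "((\<lambda>s. 2 * D * ((1 - c * \<alpha>) * ?P s - \<alpha> * (y - c) * (s\<^sup>2 * ?P s)))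
                     has_integral 2 * D * ((1 - c * \<alpha>) * X - \<alpha> * (y - c) * (Y / 3))) {0..1}"
    by (intro has_integral_mult_right has_integral_diff)
  then have "(Q has_integral 2 * D * ((1 - c * \<alpha>) * X - \<alpha> * (y - c) * (Y / 3))) {0..1}"
    by (rule has_integral_cong[THEN iffD1, rotated]) (simp add: Q_def algebra_simps)
  then have Q_integral: "(Q has_integral D * (2 * (1 - c * \<alpha>) * X - 2/3 * \<alpha> * (y - c) * Y)) {0..1}"
    by (rule has_integral_eq_rhs) (simp add: field_simps)
  have Q_cont: "continuous_on {0..1} Q"
    unfolding Q_def
    by (intro continuous_on_mult[OF _ continuous_on_prod_powr_one_minus_power2[OF x_bound]]
        continuous_intros)
  show ?thesis
    unfolding X_def[symmetric] Y_def[symmetric] D_def[symmetric]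
    by (rule has_integral_quadratic_substitution[OF \<open>c < y\<close> Q_cont Q_integral])
       (simp only: Q_def D_def integrand_quadratic_substitution_eq[OF assms])
qed

end
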